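(* Let $(\mathcal{G}, \mathit{LC}, \varphi)$ be an intrinsic definition over a class $C=(\mathcal{S},\mathcal{F})$ with $\mathcal{G}=\{g_1,\dots,g_k\}$ and $\mathit{LC}\equiv\forall z.\,\rho(z)$. Let $P_{\mathcal{G}}$ be a program (possibly with auxiliary methods) augmented with ghost code that may read and update the ghost fields $g_1,\dots,g_k$, and let $P$ be the projection of $P_{\mathcal{G}}$ obtained by eliminating the ghost code. Let $\psi_{\mathit{pre}}$ and $\psi_{\mathit{post}}$ be quantifier-free formulae over $\mathcal{F}\cup\mathcal{G}$. If the triple $\langle \mathit{LC}\wedge\psi_{\mathit{pre}}\rangle\; P_{\mathcal{G}}\; \langle \mathit{LC}\wedge\psi_{\mathit{post}}\rangle$ is valid (over configurations interpreting the ghost fields), then the triple $\langle \exists g_1,\dots,g_k.\,\mathit{LC}\wedge\psi_{\mathit{pre}}\rangle\; P\; \langle \exists g_1,\dots,g_k.\,\mathit{LC}\wedge\psi_{\mathit{post}}\rangle$ is valid (over configurations not interpreting the ghost fields), where $\exists g_1,\dots,g_k$ is second-order existential quantification over unary functions on objects.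
   Context: A class $C=(\mathcal{S},\mathcal{F})$ consists of finitely many sorts $\mathcal{S}$ (one of which is the sort $C$ of objects; the others are background sorts such as integers, sets, etc.) and finitely many unary field symbols $\mathcal{F}$ on objects (pointer fields with values in $C\uplus\{\mathit{nil}\}$, or data fields with values in background sorts); $\mathit{nil}$ is a non-object value. A $C$-heap is a finite set $O$ of objects together with an interpretation of every field on every object. An intrinsic definition $(\mathcal{G},\mathit{LC},\varphi(\bar y))$ consists of a finite set $\mathcal{G}$ of monadic (unary) map symbols on objects disjoint from $\mathcal{F}$, a local condition $\mathit{LC}$ of the form $\forall x.\,\rho(x)$ with $\rho$ a quantifier-free formula over $\mathcal{F}\cup\mathcal{G}$ and interpreted background functions, and a quantifier-free correlation formula $\varphi(\bar y)$. Programs are in an imperative while-language with (recursive) methods: $x:=\mathit{nil}$, $x:=y$, $v:=be$, field lookup $y:=x.f$, field mutation $x.f:=y$, allocation $x:=\mathsf{new}\,C()$ (a fresh object whose fields get default values, $\mathit{nil}$ for pointer fields), method calls $\bar r:=F(\bar t)$, $\mathsf{skip}$, $\mathsf{assume}\;c$, $\mathsf{return}$, sequencing, if-then-else and while. A configuration consists of a store, a finite set of allocated objects, and an interpretation of fields on them; there is an error configuration $\bot$ reached on dereferencing $\mathit{nil}$. The language is memory-safe (allocated objects never point to unallocated ones). A triple $\langle\alpha\rangle P\langle\beta\rangle$ is valid if for every configuration $\theta\models\alpha$, executing $P$ from $\theta$ never reaches $\bot$, and whenever $\theta$ transitions to $\theta'$ under $P$, $\theta'\models\beta$. Ghost code manipulates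 distinguished ghost variables and ghost fields (here the maps in $\mathcal{G}$ are treated as ghost fields of objects). Ghost code may read user variables/fields, but user variables/fields are never assigned values depending on ghost variables/fields; an if or while whose condition mentions ghost state must have a purely ghost body; ghost code contains no allocation or assume statements; ghost loops and ghost methods must always terminate. Methods may have ghost input/output parameters. The projection of a ghost-augmented program replaces all ghost code by $\mathsf{skip}$, removes ghost parameters from method signatures, and removes the corresponding arguments/results at each non-ghost call. *)

theory Defs
  imports Main
begin

section \<open>Values, expressions, conditions\<close>

text \<open>Values: objects, the non-object value nil, and background values
  (all background sorts are lumped into one type 'b).\<close>
datatype ('o,'b) val = Obj 'o | NilV | Bg 'b

definition is_obj :: "('o,'b) val \<Rightarrow> bool" where
  "is_obj v \<longleftrightarrow> (\<exists>ob. v = Obj ob)"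

definition allocd :: "'o set \<Rightarrow> ('o,'b) val \<Rightarrow> bool" where
  "allocd A v \<longleftrightarrow> (\<forall>ob. v = Obj ob \<longrightarrow> ob \<in> A)"

datatype ('x,'o,'b) bexp = BVar 'x | BFn "('o,'b) val list \<Rightarrow> 'b" "('x,'o,'b) bexp list"

fun beval :: "('x \<Rightarrow> ('o,'b) val) \<Rightarrow> ('x,'o,'b) bexp \<Rightarrow> ('o,'b) val" where
  "beval s (BVar x) = s x"
| "beval s (BFn g es) = Bg (g (map (beval s) es))"

fun bvars :: "('x,'o,'b) bexp \<Rightarrow> 'x set" where
  "bvars (BVar x) = {x}"
| "bvars (BFn g es) = \<Union> (set (map bvars es))"

fun bmap :: "('x \<Rightarrow> 'y) \<Rightarrow> ('x,'o,'b) bexp \<Rightarrow> ('y,'o,'b) bexp" where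
  "bmap f (BVar x) = BVar (f x)"
| "bmap f (BFn g es) = BFn g (map (bmap f) es)"

datatype ('x,'o,'b) cond =
    CTrue
  | CEq "('x,'o,'b) bexp" "('x,'o,'b) bexp"
  | CPred "('o,'b) val list \<Rightarrow> bool" "('x,'o,'b) bexp list"
  | CNot "('x,'o,'b) cond"
  | CAnd "('x,'o,'b) cond" "('x,'o,'b) cond"

fun ceval :: "('x \<Rightarrow> ('o,'b) val) \<Rightarrow> ('x,'o,'b) cond \<Rightarrow> bool" where
  "ceval s CTrue = True"
| "ceval s (CEq a b) = (beval s a = beval s b)"
| "ceval s (CPred p es) = p (map (beval s) es)"
| "ceval s (CNot c) = (\<not> ceval s c)"
| "ceval s (CAnd c d) = (ceval s c \<and> ceval s d)"

fun cvars :: "('x,'o,'b) cond \<Rightarrow> 'x set" where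
  "cvars CTrue = {}"
| "cvars (CEq a b) = bvars a \<union> bvars b"
| "cvars (CPred p es) = \<Union> (set (map bvars es))"
| "cvars (CNot c) = cvars c"
| "cvars (CAnd c d) = cvars c \<union> cvars d"

fun cmap :: "('x \<Rightarrow> 'y) \<Rightarrow> ('x,'o,'b) cond \<Rightarrow> ('y,'o,'b) cond" where
  "cmap f CTrue = CTrue"
| "cmap f (CEq a b) = CEq (bmap f a) (bmap f b)"
| "cmap f (CPred p es) = CPred p (map (bmap f) es)"
| "cmap f (CNot c) = CNot (cmap f c)"
| "cmap f (CAnd c d) = CAnd (cmap f c) (cmap f d)"

section \<open>Programs\<close>

datatype ('x,'f,'o,'b,'m) stmt =
    SSkip
  | SNil 'x                          (* x := nil *)
  | SAsg 'x 'x                       (* x := y *)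
  | SBAsg 'x "('x,'o,'b) bexp"       (* v := be *)
  | SLookup 'x 'x 'f                 (* y := x.f *)
  | SMut 'x 'f 'x                    (* x.f := y *)
  | SNew 'x                          (* x := new C() *)
  | SCall "'x list" 'm "'x list"     (* rs := F(ts) *)
  | SAssume "('x,'o,'b) cond"
  | SReturn
  | SSeq "('x,'f,'o,'b,'m) stmt" "('x,'f,'o,'b,'m) stmt"
  | SIf "('x,'o,'b) cond" "('x,'f,'o,'b,'m) stmt" "('x,'f,'o,'b,'m) stmt"
  | SWhile "('x,'o,'b) cond" "('x,'f,'o,'b,'m) stmt"

record ('x,'f,'o,'b,'m) meth =
  mins :: "'x list"
  mouts :: "'x list"
  mbody :: "('x,'f,'o,'b,'m) stmt"
  mghost :: bool

type_synonym ('x,'f,'o,'b,'m) env = "'m \<Rightarrow> ('x,'f,'o,'b,'m) meth"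

section \<open>Configurations and big-step semantics\<close>

record ('x,'f,'o,'b) conf =
  st :: "'x \<Rightarrow> ('o,'b) val"
  al :: "'o set"
  hp :: "'f \<Rightarrow> 'o \<Rightarrow> ('o,'b) val"

datatype ('x,'f,'o,'b) outcome = Norm "('x,'f,'o,'b) conf" | Ret "('x,'f,'o,'b) conf" | Err

definition wf_conf :: "('x,'f,'o,'b) conf \<Rightarrow> bool" where
  "wf_conf \<sigma> \<longleftrightarrow> finite (al \<sigma>) \<and> (\<forall>x. allocd (al \<sigma>) (st \<sigma> x))
     \<and> (\<forall>f. \<forall>ob\<in>al \<sigma>. allocd (al \<sigma>) (hp \<sigma> f ob))"

fun upds :: "('x \<Rightarrow> 'v) \<Rightarrow> 'x list \<Rightarrow> 'v list \<Rightarrow> 'x \<Rightarrow> 'v" where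
  "upds s (x # xs) (v # vs) = upds (s(x := v)) xs vs"
| "upds s _ _ = s"

inductive exec :: "('f \<Rightarrow> ('o,'b) val) \<Rightarrow> ('x,'f,'o,'b,'m) env \<Rightarrow> ('x,'f,'o,'b,'m) stmt
    \<Rightarrow> ('x,'f,'o,'b) conf \<Rightarrow> ('x,'f,'o,'b) outcome \<Rightarrow> bool"
  for dflt :: "'f \<Rightarrow> ('o,'b) val" and E :: "('x,'f,'o,'b,'m) env" where
  Skip: "exec dflt E SSkip \<sigma> (Norm \<sigma>)"
| NilA: "exec dflt E (SNil x) \<sigma> (Norm (\<sigma>\<lparr>st := (st \<sigma>)(x := NilV)\<rparr>))"
| Asg: "exec dflt E (SAsg x y) \<sigma> (Norm (\<sigma>\<lparr>st := (st \<sigma>)(x := st \<sigma> y)\<rparr>))"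
| BAsg: "exec dflt E (SBAsg x e) \<sigma> (Norm (\<sigma>\<lparr>st := (st \<sigma>)(x := beval (st \<sigma>) e)\<rparr>))"
| Lookup: "st \<sigma> x = Obj ob \<Longrightarrow>
    exec dflt E (SLookup y x f) \<sigma> (Norm (\<sigma>\<lparr>st := (st \<sigma>)(y := hp \<sigma> f ob)\<rparr>))"
| LookupErr: "\<not> is_obj (st \<sigma> x) \<Longrightarrow> exec dflt E (SLookup y x f) \<sigma> Err"
| Mut: "st \<sigma> x = Obj ob \<Longrightarrow>
    exec dflt E (SMut x f y) \<sigma> (Norm (\<sigma>\<lparr>hp := (hp \<sigma>)(f := (hp \<sigma> f)(ob := st \<sigma> y))\<rparr>))"
| MutErr: "\<not> is_obj (st \<sigma> x) \<Longrightarrow> exec dflt E (SMut x f y) \<sigma> Err"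
| New: "ob \<notin> al \<sigma> \<Longrightarrow>
    exec dflt E (SNew x) \<sigma> (Norm (\<sigma>\<lparr>st := (st \<sigma>)(x := Obj ob), al := insert ob (al \<sigma>),
                                       hp := (\<lambda>f. (hp \<sigma> f)(ob := dflt f))\<rparr>))"
| Call: "exec dflt E (mbody (E m)) (\<sigma>\<lparr>st := upds (\<lambda>_. NilV) (mins (E m)) (map (st \<sigma>) ts)\<rparr>) r \<Longrightarrow>
    r = Norm \<sigma>1 \<or> r = Ret \<sigma>1 \<Longrightarrow>
    exec dflt E (SCall rs m ts) \<sigma> (Norm (\<sigma>1\<lparr>st := upds (st \<sigma>) rs (map (st \<sigma>1) (mouts (E m)))\<rparr>))"
| CallErr: "exec dflt E (mbody (E m)) (\<sigma>\<lparr>st := upds (\<lambda>_. NilV) (mins (E m)) (map (st \<sigma>) ts)\<rparr>) Err \<Longrightarrow>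
    exec dflt E (SCall rs m ts) \<sigma> Err"
| Assume: "ceval (st \<sigma>) c \<Longrightarrow> exec dflt E (SAssume c) \<sigma> (Norm \<sigma>)"
| Return: "exec dflt E SReturn \<sigma> (Ret \<sigma>)"
| SeqN: "exec dflt E a \<sigma> (Norm \<sigma>1) \<Longrightarrow> exec dflt E b \<sigma>1 r \<Longrightarrow> exec dflt E (SSeq a b) \<sigma> r"
| SeqR: "exec dflt E a \<sigma> (Ret \<sigma>1) \<Longrightarrow> exec dflt E (SSeq a b) \<sigma> (Ret \<sigma>1)"
| SeqE: "exec dflt E a \<sigma> Err \<Longrightarrow> exec dflt E (SSeq a b) \<sigma> Err"
| IfT: "ceval (st \<sigma>) c \<Longrightarrow> exec dflt E a \<sigma> r \<Longrightarrow> exec dflt E (SIf c a b) \<sigma> r"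
| IfF: "\<not> ceval (st \<sigma>) c \<Longrightarrow> exec dflt E b \<sigma> r \<Longrightarrow> exec dflt E (SIf c a b) \<sigma> r"
| WhileF: "\<not> ceval (st \<sigma>) c \<Longrightarrow> exec dflt E (SWhile c a) \<sigma> (Norm \<sigma>)"
| WhileN: "ceval (st \<sigma>) c \<Longrightarrow> exec dflt E a \<sigma> (Norm \<sigma>1) \<Longrightarrow> exec dflt E (SWhile c a) \<sigma>1 r \<Longrightarrow>
    exec dflt E (SWhile c a) \<sigma> r"
| WhileR: "ceval (st \<sigma>) c \<Longrightarrow> exec dflt E a \<sigma> (Ret \<sigma>1) \<Longrightarrow> exec dflt E (SWhile c a) \<sigma> (Ret \<sigma>1)"
| WhileE: "ceval (st \<sigma>) c \<Longrightarrow> exec dflt E a \<sigma> Err \<Longrightarrow> exec dflt E (SWhile c a) \<sigma> Err"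

definition valid :: "('f \<Rightarrow> ('o,'b) val) \<Rightarrow> ('x,'f,'o,'b,'m) env \<Rightarrow> (('x,'f,'o,'b) conf \<Rightarrow> bool)
    \<Rightarrow> ('x,'f,'o,'b,'m) stmt \<Rightarrow> (('x,'f,'o,'b) conf \<Rightarrow> bool) \<Rightarrow> bool" where
  "valid dflt E \<alpha> c \<beta> \<longleftrightarrow> (\<forall>\<sigma>. wf_conf \<sigma> \<and> \<alpha> \<sigma> \<longrightarrow>
      \<not> exec dflt E c \<sigma> Err \<and>
      (\<forall>\<sigma>'. exec dflt E c \<sigma> (Norm \<sigma>') \<or> exec dflt E c \<sigma> (Ret \<sigma>') \<longrightarrow> \<beta> \<sigma>'))"

section \<open>Ghost code\<close>

text \<open>In a ghost-augmented program, variables have type 'x + 'gx and fields 'f + 'g: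
  Inl = user, Inr = ghost.\<close>

fun gh :: "('x + 'gx,'f + 'g,'o,'b,'m) env \<Rightarrow> ('x + 'gx,'f + 'g,'o,'b,'m) stmt \<Rightarrow> bool" where
  "gh E SSkip = True"
| "gh E (SNil x) = (\<not> isl x)"
| "gh E (SAsg x y) = (\<not> isl x)"
| "gh E (SBAsg x e) = (\<not> isl x)"
| "gh E (SLookup y x f) = (\<not> isl y)"
| "gh E (SMut x f y) = (\<not> isl f)"
| "gh E (SNew x) = False"
| "gh E (SCall rs m ts) = mghost (E m)"
| "gh E (SAssume c) = False"
| "gh E SReturn = False"
| "gh E (SSeq a b) = (gh E a \<and> gh E b)"
| "gh E (SIf c a b) = (gh E a \<and> gh E b)"
| "gh E (SWhile c a) = gh E a"

definition user_bexp :: "('x + 'gx,'o,'b) bexp \<Rightarrow> bool" where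
  "user_bexp e \<longleftrightarrow> (\<forall>x\<in>bvars e. isl x)"

definition user_cond :: "('x + 'gx,'o,'b) cond \<Rightarrow> bool" where
  "user_cond c \<longleftrightarrow> (\<forall>x\<in>cvars c. isl x)"

text \<open>Syntactic ghost discipline: user state never depends on ghost state; conditions
  mentioning ghost state guard purely ghost bodies; ghost code contains no allocation,
  assume or return (built into gh); call arities match.\<close>
fun gh_ok :: "('x + 'gx,'f + 'g,'o,'b,'m) env \<Rightarrow> ('x + 'gx,'f + 'g,'o,'b,'m) stmt \<Rightarrow> bool" where
  "gh_ok E SSkip = True"
| "gh_ok E (SNil x) = True"
| "gh_ok E (SAsg x y) = (isl x \<longrightarrow> isl y)"
| "gh_ok E (SBAsg x e) = (isl x \<longrightarrow> user_bexp e)"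
| "gh_ok E (SLookup y x f) = (isl y \<longrightarrow> isl x \<and> isl f)"
| "gh_ok E (SMut x f y) = (isl f \<longrightarrow> isl x \<and> isl y)"
| "gh_ok E (SNew x) = isl x"
| "gh_ok E (SCall rs m ts) =
     (length ts = length (mins (E m)) \<and> length rs = length (mouts (E m)) \<and>
      (if mghost (E m) then (\<forall>r\<in>set rs. \<not> isl r)
       else (\<forall>i<length ts. isl (mins (E m) ! i) \<longrightarrow> isl (ts ! i)) \<and>
            (\<forall>i<length rs. isl (rs ! i) = isl (mouts (E m) ! i))))"
| "gh_ok E (SAssume c) = user_cond c"
| "gh_ok E SReturn = True"
| "gh_ok E (SSeq a b) = (gh_ok E a \<and> gh_ok E b)"
| "gh_ok E (SIf c a b) = (gh_ok E a \<and> gh_ok E b \<and> (user_cond c \<or> (gh E a \<and> gh E b)))"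
| "gh_ok E (SWhile c a) = (gh_ok E a \<and> (user_cond c \<or> gh E a))"

fun subs :: "('x,'f,'o,'b,'m) stmt \<Rightarrow> ('x,'f,'o,'b,'m) stmt set" where
  "subs (SSeq a b) = insert (SSeq a b) (subs a \<union> subs b)"
| "subs (SIf c a b) = insert (SIf c a b) (subs a \<union> subs b)"
| "subs (SWhile c a) = insert (SWhile c a) (subs a)"
| "subs c = {c}"

definition is_while :: "('x,'f,'o,'b,'m) stmt \<Rightarrow> bool" where
  "is_while c \<longleftrightarrow> (\<exists>b a. c = SWhile b a)"

definition terminates :: "('f \<Rightarrow> ('o,'b) val) \<Rightarrow> ('x,'f,'o,'b,'m) env \<Rightarrow> ('x,'f,'o,'b,'m) stmt \<Rightarrow> bool" where
  "terminates dflt E c \<longleftrightarrow> (\<forall>\<sigma>. wf_conf \<sigma> \<longrightarrow> (\<exists>r. exec dflt E c \<sigma> r))"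

definition ghost_prog :: "('f + 'g \<Rightarrow> ('o,'b) val) \<Rightarrow> ('x + 'gx,'f + 'g,'o,'b,'m) env
    \<Rightarrow> ('x + 'gx,'f + 'g,'o,'b,'m) stmt \<Rightarrow> bool" where
  "ghost_prog dflt E main \<longleftrightarrow>
     gh_ok E main \<and> (\<forall>m. gh_ok E (mbody (E m))) \<and>
     (\<forall>m. mghost (E m) \<longrightarrow> gh E (mbody (E m)) \<and> (\<forall>x\<in>set (mouts (E m)). \<not> isl x)) \<and>
     (\<forall>c. (c \<in> subs main \<or> (\<exists>m. c \<in> subs (mbody (E m)))) \<longrightarrow> is_while c \<longrightarrow> gh E c \<longrightarrow>
          terminates dflt E c) \<and>
     (\<forall>m. mghost (E m) \<longrightarrow> terminates dflt E (mbody (E m)))"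

section \<open>Projection (ghost elimination)\<close>

definition keepu :: "('x + 'gx) list \<Rightarrow> 'a list \<Rightarrow> 'a list" where
  "keepu fs xs = map snd (filter (\<lambda>p. isl (fst p)) (zip fs xs))"

fun proj :: "('x + 'gx,'f + 'g,'o,'b,'m) env \<Rightarrow> ('x + 'gx,'f + 'g,'o,'b,'m) stmt
    \<Rightarrow> ('x,'f,'o,'b,'m) stmt" where
  "proj E SSkip = SSkip"
| "proj E (SNil x) = (if isl x then SNil (projl x) else SSkip)"
| "proj E (SAsg x y) = (if isl x then SAsg (projl x) (projl y) else SSkip)"
| "proj E (SBAsg x e) = (if isl x then SBAsg (projl x) (bmap projl e) else SSkip)"
| "proj E (SLookup y x f) = (if isl y then SLookup (projl y) (projl x) (projl f) else SSkip)"
| "proj E (SMut x f y) = (if isl f then SMut (projl x) (projl f) (projl y) else SSkip)"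
| "proj E (SNew x) = SNew (projl x)"
| "proj E (SCall rs m ts) = (if mghost (E m) then SSkip
     else SCall (map projl (keepu (mouts (E m)) rs)) m (map projl (keepu (mins (E m)) ts)))"
| "proj E (SAssume c) = SAssume (cmap projl c)"
| "proj E SReturn = SReturn"
| "proj E (SSeq a b) = (if gh E (SSeq a b) then SSkip else SSeq (proj E a) (proj E b))"
| "proj E (SIf c a b) = (if gh E (SIf c a b) then SSkip else SIf (cmap projl c) (proj E a) (proj E b))"
| "proj E (SWhile c a) = (if gh E (SWhile c a) then SSkip else SWhile (cmap projl c) (proj E a))"

definition proj_env :: "('x + 'gx,'f + 'g,'o,'b,'m) env \<Rightarrow> ('x,'f,'o,'b,'m) env" where
  "proj_env E = (\<lambda>m. \<lparr>mins = map projl (filter isl (mins (E m))),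
                       mouts = map projl (filter isl (mouts (E m))),
                       mbody = proj E (mbody (E m)),
                       mghost = mghost (E m)\<rparr>)"

section \<open>Quantifier-free formulas over fields, and the local condition\<close>

datatype ('x,'f,'o,'b) tm =
    TVar 'x | TNil | TFld 'f "('x,'f,'o,'b) tm" | TFn "('o,'b) val list \<Rightarrow> 'b" "('x,'f,'o,'b) tm list"

datatype ('x,'f,'o,'b) fm =
    FTrue
  | FEq "('x,'f,'o,'b) tm" "('x,'f,'o,'b) tm"
  | FPred "('o,'b) val list \<Rightarrow> bool" "('x,'f,'o,'b) tm list"
  | FNot "('x,'f,'o,'b) fm"
  | FAnd "('x,'f,'o,'b) fm" "('x,'f,'o,'b) fm"

fun teval :: "('x \<Rightarrow> ('o,'b) val) \<Rightarrow> ('f \<Rightarrow> 'o \<Rightarrow> ('o,'b) val) \<Rightarrow> ('x,'f,'o,'b) tm \<Rightarrow> ('o,'b) val" where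
  "teval s h (TVar x) = s x"
| "teval s h TNil = NilV"
| "teval s h (TFld f t) = (case teval s h t of Obj ob \<Rightarrow> h f ob | _ \<Rightarrow> NilV)"
| "teval s h (TFn g ts) = Bg (g (map (teval s h) ts))"

fun feval :: "('x \<Rightarrow> ('o,'b) val) \<Rightarrow> ('f \<Rightarrow> 'o \<Rightarrow> ('o,'b) val) \<Rightarrow> ('x,'f,'o,'b) fm \<Rightarrow> bool" where
  "feval s h FTrue = True"
| "feval s h (FEq a b) = (teval s h a = teval s h b)"
| "feval s h (FPred p ts) = p (map (teval s h) ts)"
| "feval s h (FNot p) = (\<not> feval s h p)"
| "feval s h (FAnd p q) = (feval s h p \<and> feval s h q)"

text \<open>LC = \<forall>z. \<rho>(z), z ranging over the allocated objects.\<close>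
definition holds_LC :: "(unit,'f,'o,'b) fm \<Rightarrow> 'o set \<Rightarrow> ('f \<Rightarrow> 'o \<Rightarrow> ('o,'b) val) \<Rightarrow> bool" where
  "holds_LC \<rho> A h \<longleftrightarrow> (\<forall>ob\<in>A. feval (\<lambda>_. Obj ob) h \<rho>)"

text \<open>LC \<and> \<psi> on ghost-augmented configurations (ghost fields interpreted by the heap).\<close>
definition aug_assn :: "(unit,'f + 'g,'o,'b) fm \<Rightarrow> ('x,'f + 'g,'o,'b) fm
    \<Rightarrow> ('x + 'gx,'f + 'g,'o,'b) conf \<Rightarrow> bool" where
  "aug_assn \<rho> \<psi> \<sigma> \<longleftrightarrow> holds_LC \<rho> (al \<sigma>) (hp \<sigma>) \<and> feval (\<lambda>x. st \<sigma> (Inl x)) (hp \<sigma>) \<psi>"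

text \<open>\<exists>g1..gk. LC \<and> \<psi> on user configurations: second-order quantification over
  maps from (allocated) objects to values (objects among them allocated, or nil / background).\<close>
definition ex_assn :: "(unit,'f + 'g,'o,'b) fm \<Rightarrow> ('x,'f + 'g,'o,'b) fm
    \<Rightarrow> ('x,'f,'o,'b) conf \<Rightarrow> bool" where
  "ex_assn \<rho> \<psi> \<sigma> \<longleftrightarrow> (\<exists>G :: 'g \<Rightarrow> 'o \<Rightarrow> ('o,'b) val.
      (\<forall>g. \<forall>ob\<in>al \<sigma>. allocd (al \<sigma>) (G g ob)) \<and>
      holds_LC \<rho> (al \<sigma>) (case_sum (hp \<sigma>) G) \<and> feval (st \<sigma>) (case_sum (hp \<sigma>) G) \<psi>)"

end

theory Submission
  imports Defs
begin

text \<open>The augmented program simulates its projection. Run it from a configuration whose user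
  part is the projected start configuration: user code never reads ghost state, so every projected
  statement is matched by its original, with equal effect on the user part, and every piece of
  ghost code erased by the projection terminates (ghost loops and methods are required to), never
  returns and leaves the user part unchanged, unless it fails. Hence every run of the projection is
  the user part of a run of the augmented program, or the augmented program fails.

  Given a start configuration satisfying the existential precondition, its witnesses become the
  ghost fields of such an augmented start configuration. Validity of the augmented triple rules
  out failure, and the ghost fields of the matching final configuration witness the
  postcondition.\<close>

section \<open>Well-formed configurations\<close>

lemma allocd_mono: "allocd A v \<Longrightarrow> A \<subseteq> B \<Longrightarrow> allocd B v"
  unfolding allocd_def by blast

lemma allocd_beval: "\<forall>x. allocd A (s x) \<Longrightarrow> allocd A (beval s e)"
  by (cases e) (auto simp: allocd_def)

lemma upds_pred: "(\<And>y. P (s y)) \<Longrightarrow> (\<And>v. v \<in> set vs \<Longrightarrow> P v) \<Longrightarrow> P (upds s xs vs y)"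
  by (induction s xs vs arbitrary: y rule: upds.induct) auto

lemma upds_other: "y \<notin> set xs \<Longrightarrow> upds s xs vs y = s y"
  by (induction s xs vs rule: upds.induct) auto

lemma wf_conf_st: "wf_conf \<sigma> \<Longrightarrow> allocd (al \<sigma>) (st \<sigma> x)"
  by (simp add: wf_conf_def)

lemma wf_conf_hp: "wf_conf \<sigma> \<Longrightarrow> ob \<in> al \<sigma> \<Longrightarrow> allocd (al \<sigma>) (hp \<sigma> f ob)"
  by (simp add: wf_conf_def)

lemma wf_conf_upds_st:
  assumes "wf_conf \<sigma>" "\<forall>y. allocd (al \<sigma>) (s y)" "\<forall>v\<in>set vs. allocd (al \<sigma>) v"
  shows "wf_conf (\<sigma>\<lparr>st := upds s xs vs\<rparr>)"
proof -
  have "allocd (al \<sigma>) (upds s xs vs y)" for y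
    by (rule upds_pred[where P = "allocd (al \<sigma>)"]) (use assms in auto)
  with assms(1) show ?thesis by (simp add: wf_conf_def)
qed

lemma wf_conf_call_entry: "wf_conf \<sigma> \<Longrightarrow> wf_conf (\<sigma>\<lparr>st := upds (\<lambda>_. NilV) xs (map (st \<sigma>) ts)\<rparr>)"
  by (rule wf_conf_upds_st) (auto simp: wf_conf_def allocd_def)

lemma exec_al_mono: "exec D E c \<sigma> r \<Longrightarrow> r = Norm \<sigma>' \<or> r = Ret \<sigma>' \<Longrightarrow> al \<sigma> \<subseteq> al \<sigma>'"
  by (induction arbitrary: \<sigma>' rule: exec.induct) force+

lemma wf_conf_st_upd: "wf_conf \<sigma> \<Longrightarrow> allocd (al \<sigma>) v \<Longrightarrow> wf_conf (\<sigma>\<lparr>st := (st \<sigma>)(x := v)\<rparr>)"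
  by (simp add: wf_conf_def)

lemma wf_conf_hp_upd:
  "wf_conf \<sigma> \<Longrightarrow> allocd (al \<sigma>) v \<Longrightarrow> wf_conf (\<sigma>\<lparr>hp := (hp \<sigma>)(f := (hp \<sigma> f)(ob := v))\<rparr>)"
  by (simp add: wf_conf_def)

lemma wf_conf_new:
  assumes "wf_conf \<sigma>" "\<forall>f. \<not> is_obj (D f)"
  shows "wf_conf (\<sigma>\<lparr>st := (st \<sigma>)(x := Obj ob), al := insert ob (al \<sigma>), hp := \<lambda>f. (hp \<sigma> f)(ob := D f)\<rparr>)"
  using assms by (auto simp: wf_conf_def allocd_def is_obj_def)

fun wf_outcome :: "('x,'f,'o,'b) outcome \<Rightarrow> bool" where
  "wf_outcome (Norm \<sigma>) = wf_conf \<sigma>"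
| "wf_outcome (Ret \<sigma>) = wf_conf \<sigma>"
| "wf_outcome Err = True"

lemma exec_wf_outcome:
  assumes "exec D E c \<sigma> r" "\<forall>f. \<not> is_obj (D f)" "wf_conf \<sigma>"
  shows "wf_outcome r"
  using assms
proof (induction rule: exec.induct)
  case (NilA x \<sigma>)
  then show ?case by (simp add: allocd_def wf_conf_st_upd)
next
  case (Asg x y \<sigma>)
  then show ?case by (simp add: wf_conf_st wf_conf_st_upd)
next
  case (BAsg x e \<sigma>)
  then show ?case by (simp add: wf_conf_st wf_conf_st_upd allocd_beval)
next
  case (Lookup \<sigma> x ob y f)
  then have "ob \<in> al \<sigma>" using wf_conf_st[of \<sigma> x] by (simp add: allocd_def)
  with Lookup show ?case by (simp add: wf_conf_hp wf_conf_st_upd)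
next
  case (Mut \<sigma> x ob f y)
  then show ?case by (simp add: wf_conf_st wf_conf_hp_upd)
next
  case (New ob \<sigma> x)
  then show ?case by (simp add: wf_conf_new)
next
  case (Call m \<sigma> ts r \<sigma>1 rs)
  have "wf_outcome r" using Call.IH Call.prems wf_conf_call_entry by blast
  with Call.hyps(2) have "wf_conf \<sigma>1" by auto
  have "al \<sigma> \<subseteq> al \<sigma>1" using exec_al_mono[OF Call.hyps(1,2)] by simp
  then have "\<forall>y. allocd (al \<sigma>1) (st \<sigma> y)"
    using allocd_mono wf_conf_st[OF Call.prems(2)] by blast
  with \<open>wf_conf \<sigma>1\<close> show ?case by (auto intro!: wf_conf_upds_st wf_conf_st)
next
  case (SeqN a \<sigma> \<sigma>1 b r)
  then show ?case by simp
next
  case (WhileN \<sigma> c a \<sigma>1 r)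
  then show ?case by simp
qed simp_all

section \<open>Validity and termination\<close>

lemma valid_conseq:
  assumes "valid D E \<alpha> c \<beta>"
    and "\<And>\<sigma>. wf_conf \<sigma> \<Longrightarrow> \<alpha>' \<sigma> \<Longrightarrow> \<alpha> \<sigma>" and "\<And>\<sigma>. \<beta> \<sigma> \<Longrightarrow> \<beta>' \<sigma>"
  shows "valid D E \<alpha>' c \<beta>'"
  using assms unfolding valid_def by blast

lemma terminates_SCall:
  fixes E :: "('x,'f,'o,'b,'m) env"
  assumes "terminates D E (mbody (E m))"
  shows "terminates D E (SCall rs m ts)"
  unfolding terminates_def
proof (intro allI impI)
  fix \<sigma> :: "('x,'f,'o,'b) conf" assume "wf_conf \<sigma>"
  then obtain r where "exec D E (mbody (E m)) (\<sigma>\<lparr>st := upds (\<lambda>_. NilV) (mins (E m)) (map (st \<sigma>) ts)\<rparr>) r"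
    using assms wf_conf_call_entry unfolding terminates_def by blast
  then show "\<exists>r. exec D E (SCall rs m ts) \<sigma> r"
    by (cases r) (blast intro: exec.Call exec.CallErr)+
qed

lemma terminates_SSeq:
  fixes E :: "('x,'f,'o,'b,'m) env"
  assumes "\<forall>f. \<not> is_obj (D f)" "terminates D E a" "terminates D E b"
  shows "terminates D E (SSeq a b)"
  unfolding terminates_def
proof (intro allI impI)
  fix \<sigma> :: "('x,'f,'o,'b) conf" assume "wf_conf \<sigma>"
  then obtain r where r: "exec D E a \<sigma> r"
    using assms(2) unfolding terminates_def by blast
  show "\<exists>r. exec D E (SSeq a b) \<sigma> r"
  proof (cases r)
    case (Norm \<sigma>1)
    then have "wf_conf \<sigma>1" using exec_wf_outcome[OF r assms(1) \<open>wf_conf \<sigma>\<close>] by simp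
    then show ?thesis using r Norm assms(3) unfolding terminates_def by (blast intro: exec.SeqN)
  qed (use r in \<open>blast intro: exec.SeqR exec.SeqE\<close>)+
qed

lemma terminates_SIf: "terminates D E a \<Longrightarrow> terminates D E b \<Longrightarrow> terminates D E (SIf d a b)"
  unfolding terminates_def by (metis exec.IfT exec.IfF)

section \<open>User parts of augmented configurations\<close>

definition user_conf :: "('x + 'gx,'f + 'g,'o,'b) conf \<Rightarrow> ('x,'f,'o,'b) conf" where
  "user_conf \<sigma> = \<lparr>st = st \<sigma> \<circ> Inl, al = al \<sigma>, hp = hp \<sigma> \<circ> Inl\<rparr>"

fun user_outcome :: "('x + 'gx,'f + 'g,'o,'b) outcome \<Rightarrow> ('x,'f,'o,'b) outcome" where
  "user_outcome (Norm \<sigma>) = Norm (user_conf \<sigma>)"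
| "user_outcome (Ret \<sigma>) = Ret (user_conf \<sigma>)"
| "user_outcome Err = Err"

lemma user_conf_simps [simp]:
  "st (user_conf \<sigma>) = st \<sigma> \<circ> Inl" "al (user_conf \<sigma>) = al \<sigma>" "hp (user_conf \<sigma>) = hp \<sigma> \<circ> Inl"
  "user_conf (\<sigma>\<lparr>st := s\<rparr>) = (user_conf \<sigma>)\<lparr>st := s \<circ> Inl\<rparr>"
  "user_conf (\<sigma>\<lparr>al := A\<rparr>) = (user_conf \<sigma>)\<lparr>al := A\<rparr>"
  "user_conf (\<sigma>\<lparr>hp := h\<rparr>) = (user_conf \<sigma>)\<lparr>hp := h \<circ> Inl\<rparr>"
  by (simp_all add: user_conf_def)

lemma user_conf_eq_iff:
  "user_conf \<sigma> = \<tau> \<longleftrightarrow> st \<sigma> \<circ> Inl = st \<tau> \<and> al \<sigma> = al \<tau> \<and> hp \<sigma> \<circ> Inl = hp \<tau>"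
  by (cases \<tau>) (auto simp: user_conf_def)

lemma user_outcome_eq_iff [simp]:
  "user_outcome ra = Norm \<sigma> \<longleftrightarrow> (\<exists>\<sigma>a. ra = Norm \<sigma>a \<and> user_conf \<sigma>a = \<sigma>)"
  "user_outcome ra = Ret \<sigma> \<longleftrightarrow> (\<exists>\<sigma>a. ra = Ret \<sigma>a \<and> user_conf \<sigma>a = \<sigma>)"
  "user_outcome ra = Err \<longleftrightarrow> ra = Err"
  by (cases ra; auto)+

lemma comp_Inl_fun_upd_Inl [simp]: "f(Inl x := v) \<circ> Inl = (f \<circ> Inl)(x := v)"
  by (simp add: fun_eq_iff)

lemma comp_Inl_fun_upd_Inr [simp]: "\<not> isl z \<Longrightarrow> f(z := v) \<circ> Inl = f \<circ> Inl"
  by (cases z) (auto simp: fun_eq_iff)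

lemma beval_bmap_projl: "user_bexp e \<Longrightarrow> beval (s \<circ> Inl) (bmap projl e) = beval s e"
proof (induction e)
  case (BFn g es)
  then have "map (beval (s \<circ> Inl)) (map (bmap projl) es) = map (beval s) es"
    by (auto simp: user_bexp_def comp_def)
  then show ?case by (simp only: beval.simps bmap.simps)
qed (auto simp: user_bexp_def isl_def)

lemma ceval_cmap_projl: "user_cond c \<Longrightarrow> ceval (s \<circ> Inl) (cmap projl c) = ceval s c"
proof (induction c)
  case (CEq a b)
  then have "user_bexp a" "user_bexp b" by (simp_all add: user_cond_def user_bexp_def)
  then show ?case by (simp add: beval_bmap_projl[unfolded comp_def])
next
  case (CPred p es)
  then have "map (beval (s \<circ> Inl)) (map (bmap projl) es) = map (beval s) es"
    by (auto simp: user_cond_def user_bexp_def beval_bmap_projl)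
  then show ?case by (simp only: ceval.simps cmap.simps)
qed (auto simp: user_cond_def)

lemma keepu_simps [simp]:
  "keepu [] vs = []" "keepu xs [] = []"
  "keepu (x # xs) (v # vs) = (if isl x then v # keepu xs vs else keepu xs vs)"
  by (simp_all add: keepu_def)

lemma upds_Inl:
  "length xs = length vs \<Longrightarrow> (\<forall>y. s' y = s (Inl y)) \<Longrightarrow>
    upds s' (map projl (filter isl xs)) (keepu xs vs) y = upds s xs vs (Inl y)"
proof (induction xs arbitrary: vs s s')
  case (Cons x xs)
  then obtain v vs' where vs: "vs = v # vs'" by (cases vs) auto
  show ?case
  proof (cases x)
    case (Inl x')
    then have "\<forall>y. (s'(x' := v)) y = (s(x := v)) (Inl y)" using Cons.prems by auto
    then show ?thesis
      using Cons.IH[where vs = vs' and s = "s(x := v)" and s' = "s'(x' := v)"] Cons.prems Inl vs by (simp add: fun_upd_def)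
  next
    case (Inr x')
    then have "\<forall>y. s' y = (s(x := v)) (Inl y)" using Cons.prems by auto
    then show ?thesis
      using Cons.IH[where vs = vs' and s = "s(x := v)" and s' = s'] Cons.prems Inr vs by (simp add: fun_upd_def)
  qed
qed simp

lemma upds_comp_Inl:
  "length xs = length vs \<Longrightarrow>
    upds s xs vs \<circ> Inl = upds (s \<circ> Inl) (map projl (filter isl xs)) (keepu xs vs)"
  by (simp add: fun_eq_iff upds_Inl[of xs vs "s \<circ> Inl" s])

lemma upds_args_comp_Inl:
  "list_all2 (\<lambda>a b. isl a \<longrightarrow> isl b) xs ts \<Longrightarrow>
    upds (\<lambda>_. NilV) xs (map s ts) \<circ> Inl
    = upds (\<lambda>_. NilV) (map projl (filter isl xs)) (map (s \<circ> Inl) (map projl (keepu xs ts)))"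
proof -
  assume "list_all2 (\<lambda>a b. isl a \<longrightarrow> isl b) xs ts"
  then have "keepu xs (map s ts) = map (s \<circ> Inl) (map projl (keepu xs ts))"
    by (induction rule: list_all2_induct) (auto simp: isl_def)
  then show ?thesis
    using upds_comp_Inl[of xs "map s ts"] list_all2_lengthD[OF \<open>list_all2 _ xs ts\<close>]
    by (simp add: comp_def)
qed

lemma upds_results_comp_Inl:
  "list_all2 (\<lambda>a b. isl a = isl b) rs os \<Longrightarrow>
    upds s rs (map s1 os) \<circ> Inl
    = upds (s \<circ> Inl) (map projl (keepu os rs)) (map (s1 \<circ> Inl) (map projl (filter isl os)))"
proof -
  assume rs: "list_all2 (\<lambda>a b. isl a = isl b) rs os"
  then have "keepu os rs = filter isl rs"
    by (induction rule: list_all2_induct) auto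
  moreover from rs have "keepu rs (map s1 os) = map (s1 \<circ> Inl) (map projl (filter isl os))"
    by (induction rule: list_all2_induct) (auto simp: isl_def)
  ultimately show ?thesis
    using upds_comp_Inl[of rs "map s1 os"] list_all2_lengthD[OF rs] by simp
qed

lemma user_conf_call_entry:
  assumes "list_all2 (\<lambda>a b. isl a \<longrightarrow> isl b) (mins (E m)) ts0"
  shows "(user_conf \<sigma>a)\<lparr>st := upds (\<lambda>_. NilV) (mins (proj_env E m))
            (map (st (user_conf \<sigma>a)) (map projl (keepu (mins (E m)) ts0)))\<rparr>
    = user_conf (\<sigma>a\<lparr>st := upds (\<lambda>_. NilV) (mins (E m)) (map (st \<sigma>a) ts0)\<rparr>)"
  using assms by (simp add: proj_env_def upds_args_comp_Inl)

lemma user_conf_call_exit: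
  assumes "list_all2 (\<lambda>a b. isl a = isl b) rs0 (mouts (E m))"
  shows "(user_conf \<sigma>a1)\<lparr>st := upds (st (user_conf \<sigma>a)) (map projl (keepu (mouts (E m)) rs0))
            (map (st (user_conf \<sigma>a1)) (mouts (proj_env E m)))\<rparr>
    = user_conf (\<sigma>a1\<lparr>st := upds (st \<sigma>a) rs0 (map (st \<sigma>a1) (mouts (E m)))\<rparr>)"
  using assms by (simp add: proj_env_def upds_results_comp_Inl)

section \<open>Inverting the projection\<close>

lemma proj_eq_SSkipD: "proj E c = SSkip \<Longrightarrow> gh E c"
  by (cases c) (auto split: if_splits)

lemma proj_eq_SNilD: "proj E c = SNil x \<Longrightarrow> c = SNil (Inl x)"
  by (cases c) (auto split: if_splits simp: isl_def)

lemma proj_eq_SAsgD: "proj E c = SAsg x y \<Longrightarrow> gh_ok E c \<Longrightarrow> c = SAsg (Inl x) (Inl y)"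
  by (cases c) (auto split: if_splits simp: isl_def)

lemma proj_eq_SBAsgD:
  "proj E c = SBAsg x e \<Longrightarrow> gh_ok E c \<Longrightarrow>
    \<exists>e0. c = SBAsg (Inl x) e0 \<and> e = bmap projl e0 \<and> user_bexp e0"
  by (cases c) (auto split: if_splits simp: isl_def)

lemma proj_eq_SLookupD:
  "proj E c = SLookup y x f \<Longrightarrow> gh_ok E c \<Longrightarrow> c = SLookup (Inl y) (Inl x) (Inl f)"
  by (cases c) (auto split: if_splits simp: isl_def)

lemma proj_eq_SMutD: "proj E c = SMut x f y \<Longrightarrow> gh_ok E c \<Longrightarrow> c = SMut (Inl x) (Inl f) (Inl y)"
  by (cases c) (auto split: if_splits simp: isl_def)

lemma proj_eq_SNewD: "proj E c = SNew x \<Longrightarrow> gh_ok E c \<Longrightarrow> c = SNew (Inl x)"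
  by (cases c) (auto split: if_splits simp: isl_def)

lemma proj_eq_SCallD:
  "proj E c = SCall rs m ts \<Longrightarrow> gh_ok E c \<Longrightarrow>
    \<exists>rs0 ts0. c = SCall rs0 m ts0 \<and> \<not> mghost (E m) \<and>
      rs = map projl (keepu (mouts (E m)) rs0) \<and> ts = map projl (keepu (mins (E m)) ts0) \<and>
      list_all2 (\<lambda>a b. isl a \<longrightarrow> isl b) (mins (E m)) ts0 \<and>
      list_all2 (\<lambda>a b. isl a = isl b) rs0 (mouts (E m))"
  by (cases c) (auto split: if_splits simp: list_all2_conv_all_nth)

lemma proj_eq_SAssumeD:
  "proj E c = SAssume b \<Longrightarrow> gh_ok E c \<Longrightarrow> \<exists>b0. c = SAssume b0 \<and> b = cmap projl b0 \<and> user_cond b0"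
  by (cases c) (auto split: if_splits)

lemma proj_eq_SReturnD: "proj E c = SReturn \<Longrightarrow> c = SReturn"
  by (cases c) (auto split: if_splits)

lemma proj_eq_SSeqD: "proj E c = SSeq a b \<Longrightarrow> \<exists>a0 b0. c = SSeq a0 b0 \<and> a = proj E a0 \<and> b = proj E b0"
  by (cases c) (auto split: if_splits)

lemma proj_eq_SIfD:
  "proj E c = SIf d a b \<Longrightarrow> gh_ok E c \<Longrightarrow>
    \<exists>d0 a0 b0. c = SIf d0 a0 b0 \<and> d = cmap projl d0 \<and> user_cond d0 \<and> a = proj E a0 \<and> b = proj E b0"
  by (cases c) (auto split: if_splits)

lemma proj_eq_SWhileD:
  "proj E c = SWhile d a \<Longrightarrow> gh_ok E c \<Longrightarrow>
    \<exists>d0 a0. c = SWhile d0 a0 \<and> d = cmap projl d0 \<and> user_cond d0 \<and> a = proj E a0"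
  by (cases c) (auto split: if_splits)

section \<open>Ghost code and the simulation\<close>

definition ghost_loops_terminate :: "('f + 'g \<Rightarrow> ('o,'b) val) \<Rightarrow> ('x + 'gx,'f + 'g,'o,'b,'m) env
    \<Rightarrow> ('x + 'gx,'f + 'g,'o,'b,'m) stmt \<Rightarrow> bool" where
  "ghost_loops_terminate D E c \<longleftrightarrow> (\<forall>w\<in>subs c. is_while w \<longrightarrow> gh E w \<longrightarrow> terminates D E w)"

lemma ghost_loops_terminate_simps [simp]:
  "ghost_loops_terminate D E (SSeq a b) \<longleftrightarrow> ghost_loops_terminate D E a \<and> ghost_loops_terminate D E b"
  "ghost_loops_terminate D E (SIf d a b) \<longleftrightarrow> ghost_loops_terminate D E a \<and> ghost_loops_terminate D E b"
  "ghost_loops_terminate D E (SWhile d a) \<longleftrightarrow>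
    ghost_loops_terminate D E a \<and> (gh E a \<longrightarrow> terminates D E (SWhile d a))"
  by (auto simp: ghost_loops_terminate_def is_while_def)

text \<open>Failure of the augmented program is admitted: validity of the augmented triple excludes it.\<close>

definition lifts :: "('f + 'g \<Rightarrow> ('o,'b) val) \<Rightarrow> ('x + 'gx,'f + 'g,'o,'b,'m) env
    \<Rightarrow> ('x + 'gx,'f + 'g,'o,'b,'m) stmt \<Rightarrow> ('x + 'gx,'f + 'g,'o,'b) conf \<Rightarrow> ('x,'f,'o,'b) outcome \<Rightarrow> bool" where
  "lifts D E c \<sigma>a r \<longleftrightarrow> exec D E c \<sigma>a Err \<or> (\<exists>ra. exec D E c \<sigma>a ra \<and> user_outcome ra = r)"

lemma liftsI: "exec D E c \<sigma>a ra \<Longrightarrow> user_outcome ra = r \<Longrightarrow> lifts D E c \<sigma>a r"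
  unfolding lifts_def by blast

lemma lifts_ErrI: "exec D E c \<sigma>a Err \<Longrightarrow> lifts D E c \<sigma>a r"
  unfolding lifts_def by blast

lemma lifts_NormE:
  assumes "lifts D E c \<sigma>a (Norm \<sigma>)"
  obtains "exec D E c \<sigma>a Err" | \<sigma>a' where "exec D E c \<sigma>a (Norm \<sigma>a')" "\<sigma> = user_conf \<sigma>a'"
  using assms unfolding lifts_def by auto

locale ghost_env =
  fixes D :: "'f + 'g \<Rightarrow> ('o,'b) val" and E :: "('x + 'gx,'f + 'g,'o,'b,'m) env"
  assumes defaults_not_obj: "\<forall>f. \<not> is_obj (D f)"
    and body_gh_ok: "gh_ok E (mbody (E m))"
    and ghost_body: "mghost (E m) \<Longrightarrow> gh E (mbody (E m))"
    and ghost_body_terminates: "mghost (E m) \<Longrightarrow> terminates D E (mbody (E m))"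
    and body_ghost_loops_terminate: "ghost_loops_terminate D E (mbody (E m))"
begin

lemma ghost_terminates: "gh E c \<Longrightarrow> ghost_loops_terminate D E c \<Longrightarrow> terminates D E c"
proof (induction c)
  case (SLookup y x f)
  show ?case unfolding terminates_def by (metis exec.Lookup exec.LookupErr is_obj_def)
next
  case (SMut x f y)
  show ?case unfolding terminates_def by (metis exec.Mut exec.MutErr is_obj_def)
next
  case (SCall rs m ts)
  then show ?case by (simp add: ghost_body_terminates terminates_SCall)
next
  case (SSeq a b)
  then show ?case by (simp add: defaults_not_obj terminates_SSeq)
next
  case (SIf d a b)
  then show ?case by (simp add: terminates_SIf)
qed (auto simp: terminates_def intro: exec.intros)

lemma ghost_exec_user_conf:
  "exec D E c \<sigma> r \<Longrightarrow> gh E c \<Longrightarrow> gh_ok E c \<Longrightarrow>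
    r = Err \<or> (\<exists>\<sigma>'. r = Norm \<sigma>' \<and> user_conf \<sigma>' = user_conf \<sigma>)"
proof (induction rule: exec.induct)
  case (Call m \<sigma> ts r \<sigma>1 rs)
  then have "user_conf \<sigma>1 = user_conf (\<sigma>\<lparr>st := upds (\<lambda>_. NilV) (mins (E m)) (map (st \<sigma>) ts)\<rparr>)"
    using body_gh_ok ghost_body by auto
  moreover have "\<forall>x. Inl x \<notin> set rs" using Call.prems by (auto split: if_splits)
  ultimately show ?case by (auto simp: user_conf_eq_iff fun_eq_iff upds_other)
qed auto

lemma lifts_ghost_stmt:
  assumes "gh E c" "gh_ok E c" "ghost_loops_terminate D E c" "wf_conf \<sigma>a"
  shows "lifts D E c \<sigma>a (Norm (user_conf \<sigma>a))"
proof -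
  obtain r where "exec D E c \<sigma>a r"
    using ghost_terminates assms unfolding terminates_def by blast
  then show ?thesis
    using ghost_exec_user_conf[of c \<sigma>a r] assms by (auto intro: liftsI lifts_ErrI)
qed

lemma exec_proj_lifts:
  "exec (D \<circ> Inl) (proj_env E) s \<sigma> r \<Longrightarrow> s = proj E c \<Longrightarrow> \<sigma> = user_conf \<sigma>a \<Longrightarrow>
    gh_ok E c \<Longrightarrow> ghost_loops_terminate D E c \<Longrightarrow> wf_conf \<sigma>a \<Longrightarrow> lifts D E c \<sigma>a r"
proof (induction arbitrary: c \<sigma>a rule: exec.induct)
  case (Skip \<sigma>)
  then show ?case using proj_eq_SSkipD lifts_ghost_stmt by metis
next
  case (NilA x \<sigma>)
  then have "c = SNil (Inl x)" by (simp add: proj_eq_SNilD)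
  with NilA.prems show ?case by (auto intro!: liftsI exec.NilA)
next
  case (Asg x y \<sigma>)
  then have "c = SAsg (Inl x) (Inl y)" by (simp add: proj_eq_SAsgD)
  with Asg.prems show ?case by (auto intro!: liftsI exec.Asg)
next
  case (BAsg x e \<sigma>)
  then obtain e0 where "c = SBAsg (Inl x) e0" "e = bmap projl e0" "user_bexp e0"
    using proj_eq_SBAsgD by metis
  with BAsg.prems show ?case by (auto intro!: liftsI exec.BAsg simp: beval_bmap_projl)
next
  case (Lookup \<sigma> x ob y f)
  then have "c = SLookup (Inl y) (Inl x) (Inl f)" by (simp add: proj_eq_SLookupD)
  with Lookup show ?case by (auto intro!: liftsI exec.Lookup)
next
  case (LookupErr \<sigma> x y f)
  then have "c = SLookup (Inl y) (Inl x) (Inl f)" by (simp add: proj_eq_SLookupD)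
  with LookupErr show ?case by (auto intro!: lifts_ErrI exec.LookupErr)
next
  case (Mut \<sigma> x ob f y)
  then have "c = SMut (Inl x) (Inl f) (Inl y)" by (simp add: proj_eq_SMutD)
  with Mut show ?case by (auto intro!: liftsI exec.Mut)
next
  case (MutErr \<sigma> x f y)
  then have "c = SMut (Inl x) (Inl f) (Inl y)" by (simp add: proj_eq_SMutD)
  with MutErr show ?case by (auto intro!: lifts_ErrI exec.MutErr)
next
  case (New ob \<sigma> x)
  then have "c = SNew (Inl x)" by (simp add: proj_eq_SNewD)
  with New show ?case
    by (auto intro!: liftsI exec.New simp del: user_conf_simps(4-6) simp add: user_conf_eq_iff fun_eq_iff)
next
  case (Assume \<sigma> b)
  then obtain b0 where "c = SAssume b0" "b = cmap projl b0" "user_cond b0"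
    using proj_eq_SAssumeD by metis
  with Assume show ?case by (auto intro!: liftsI exec.Assume simp: ceval_cmap_projl)
next
  case (Return \<sigma>)
  then have "c = SReturn" by (metis proj_eq_SReturnD)
  with Return show ?case by (auto intro!: liftsI exec.Return)
next
  case (Call m \<sigma> ts r \<sigma>1 rs)
  then obtain rs0 ts0 where c: "c = SCall rs0 m ts0" "\<not> mghost (E m)"
    and rs: "rs = map projl (keepu (mouts (E m)) rs0)"
    and ts: "ts = map projl (keepu (mins (E m)) ts0)"
    and args: "list_all2 (\<lambda>a b. isl a \<longrightarrow> isl b) (mins (E m)) ts0"
    and res: "list_all2 (\<lambda>a b. isl a = isl b) rs0 (mouts (E m))"
    using proj_eq_SCallD by metis
  define \<sigma>c where "\<sigma>c = \<sigma>a\<lparr>st := upds (\<lambda>_. NilV) (mins (E m)) (map (st \<sigma>a) ts0)\<rparr>"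
  have "\<sigma>\<lparr>st := upds (\<lambda>_. NilV) (mins (proj_env E m)) (map (st \<sigma>) ts)\<rparr> = user_conf \<sigma>c"
    unfolding \<sigma>c_def ts Call.prems(2) by (rule user_conf_call_entry[where E = E and m = m, OF args])
  then have "lifts D E (mbody (E m)) \<sigma>c r"
    using Call.prems(5) by (intro Call.IH body_gh_ok body_ghost_loops_terminate)
      (simp_all add: proj_env_def \<sigma>c_def wf_conf_call_entry)
  then consider "exec D E (mbody (E m)) \<sigma>c Err"
    | \<sigma>a1 where "exec D E (mbody (E m)) \<sigma>c (Norm \<sigma>a1) \<or> exec D E (mbody (E m)) \<sigma>c (Ret \<sigma>a1)"
        "\<sigma>1 = user_conf \<sigma>a1"
    using Call.hyps(2) unfolding lifts_def by force
  then show ?case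
  proof cases
    case 1
    then show ?thesis unfolding c \<sigma>c_def by (blast intro: lifts_ErrI exec.CallErr)
  next
    case 2
    then have "exec D E c \<sigma>a (Norm (\<sigma>a1\<lparr>st := upds (st \<sigma>a) rs0 (map (st \<sigma>a1) (mouts (E m)))\<rparr>))"
      unfolding c \<sigma>c_def by (blast intro: exec.Call)
    moreover have "user_conf (\<sigma>a1\<lparr>st := upds (st \<sigma>a) rs0 (map (st \<sigma>a1) (mouts (E m)))\<rparr>)
        = \<sigma>1\<lparr>st := upds (st \<sigma>) rs (map (st \<sigma>1) (mouts (proj_env E m)))\<rparr>"
      unfolding rs Call.prems(2) 2(2) by (rule user_conf_call_exit[where E = E and m = m, OF res, symmetric])
    ultimately show ?thesis by (auto intro: liftsI)
  qed
next
  case (CallErr m \<sigma> ts rs)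
  then obtain rs0 ts0 where c: "c = SCall rs0 m ts0"
    and ts: "ts = map projl (keepu (mins (E m)) ts0)"
    and args: "list_all2 (\<lambda>a b. isl a \<longrightarrow> isl b) (mins (E m)) ts0"
    using proj_eq_SCallD by metis
  define \<sigma>c where "\<sigma>c = \<sigma>a\<lparr>st := upds (\<lambda>_. NilV) (mins (E m)) (map (st \<sigma>a) ts0)\<rparr>"
  have "\<sigma>\<lparr>st := upds (\<lambda>_. NilV) (mins (proj_env E m)) (map (st \<sigma>) ts)\<rparr> = user_conf \<sigma>c"
    unfolding \<sigma>c_def ts CallErr.prems(2) by (rule user_conf_call_entry[where E = E and m = m, OF args])
  then have "lifts D E (mbody (E m)) \<sigma>c Err"
    using CallErr.prems(5) by (intro CallErr.IH body_gh_ok body_ghost_loops_terminate)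
      (simp_all add: proj_env_def \<sigma>c_def wf_conf_call_entry)
  then show ?case unfolding c \<sigma>c_def lifts_def by (auto intro: exec.CallErr)
next
  case (SeqN a \<sigma> \<sigma>1 b r)
  then obtain a0 b0 where c: "c = SSeq a0 b0" "a = proj E a0" "b = proj E b0"
    using proj_eq_SSeqD by metis
  have "lifts D E a0 \<sigma>a (Norm \<sigma>1)" using SeqN.IH(1) SeqN.prems c by simp
  then show ?case
  proof (cases rule: lifts_NormE)
    case 1
    then show ?thesis unfolding c by (blast intro: lifts_ErrI exec.SeqE)
  next
    case (2 \<sigma>a1)
    then have "wf_conf \<sigma>a1" using exec_wf_outcome defaults_not_obj SeqN.prems(5) by fastforce
    with 2 have "lifts D E b0 \<sigma>a1 r" using SeqN.IH(2) SeqN.prems c by simp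
    with 2 show ?thesis unfolding c lifts_def by (blast intro: exec.SeqN)
  qed
next
  case (SeqR a \<sigma> \<sigma>1 b)
  then obtain a0 b0 where c: "c = SSeq a0 b0" "a = proj E a0"
    using proj_eq_SSeqD by metis
  have "lifts D E a0 \<sigma>a (Ret \<sigma>1)" using SeqR.IH SeqR.prems c by simp
  then show ?case unfolding c lifts_def by (auto intro: exec.SeqE exec.SeqR)
next
  case (SeqE a \<sigma> b)
  then obtain a0 b0 where c: "c = SSeq a0 b0" "a = proj E a0"
    using proj_eq_SSeqD by metis
  have "lifts D E a0 \<sigma>a Err" using SeqE.IH SeqE.prems c by simp
  then show ?case unfolding c lifts_def by (auto intro: exec.SeqE)
next
  case (IfT \<sigma> d a r b)
  then obtain d0 a0 b0 where c: "c = SIf d0 a0 b0" "d = cmap projl d0" "user_cond d0" "a = proj E a0"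
    using proj_eq_SIfD by metis
  have "ceval (st \<sigma>a) d0" using IfT.hyps(1) IfT.prems(2) c by (simp add: ceval_cmap_projl)
  moreover have "lifts D E a0 \<sigma>a r" using IfT.IH IfT.prems c by simp
  ultimately show ?case unfolding c lifts_def by (blast intro: exec.IfT)
next
  case (IfF \<sigma> d b r a)
  then obtain d0 a0 b0 where c: "c = SIf d0 a0 b0" "d = cmap projl d0" "user_cond d0" "b = proj E b0"
    using proj_eq_SIfD by metis
  have "\<not> ceval (st \<sigma>a) d0" using IfF.hyps(1) IfF.prems(2) c by (simp add: ceval_cmap_projl)
  moreover have "lifts D E b0 \<sigma>a r" using IfF.IH IfF.prems c by simp
  ultimately show ?case unfolding c lifts_def by (blast intro: exec.IfF)
next
  case (WhileF \<sigma> d a)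
  then obtain d0 a0 where c: "c = SWhile d0 a0" "d = cmap projl d0" "user_cond d0"
    using proj_eq_SWhileD by metis
  have "\<not> ceval (st \<sigma>a) d0" using WhileF.hyps WhileF.prems(2) c by (simp add: ceval_cmap_projl)
  with WhileF.prems(2) show ?case unfolding c by (auto intro!: liftsI exec.WhileF)
next
  case (WhileN \<sigma> d a \<sigma>1 r)
  then obtain d0 a0 where c: "c = SWhile d0 a0" "d = cmap projl d0" "user_cond d0" "a = proj E a0"
    using proj_eq_SWhileD by metis
  have cond: "ceval (st \<sigma>a) d0" using WhileN.hyps(1) WhileN.prems(2) c by (simp add: ceval_cmap_projl)
  have "lifts D E a0 \<sigma>a (Norm \<sigma>1)" using WhileN.IH(1) WhileN.prems c by simp
  then show ?case
  proof (cases rule: lifts_NormE)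
    case 1
    with cond show ?thesis unfolding c by (blast intro: lifts_ErrI exec.WhileE)
  next
    case (2 \<sigma>a1)
    then have "wf_conf \<sigma>a1" using exec_wf_outcome defaults_not_obj WhileN.prems(5) by fastforce
    with 2 have "lifts D E c \<sigma>a1 r" using WhileN.IH(2) WhileN.prems by simp
    with 2 cond show ?thesis unfolding c lifts_def by (blast intro: exec.WhileN)
  qed
next
  case (WhileR \<sigma> d a \<sigma>1)
  then obtain d0 a0 where c: "c = SWhile d0 a0" "d = cmap projl d0" "user_cond d0" "a = proj E a0"
    using proj_eq_SWhileD by metis
  have "ceval (st \<sigma>a) d0" using WhileR.hyps(1) WhileR.prems(2) c by (simp add: ceval_cmap_projl)
  moreover have "lifts D E a0 \<sigma>a (Ret \<sigma>1)" using WhileR.IH WhileR.prems c by simp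
  ultimately show ?case unfolding c lifts_def by (auto intro: exec.WhileE exec.WhileR)
next
  case (WhileE \<sigma> d a)
  then obtain d0 a0 where c: "c = SWhile d0 a0" "d = cmap projl d0" "user_cond d0" "a = proj E a0"
    using proj_eq_SWhileD by metis
  have "ceval (st \<sigma>a) d0" using WhileE.hyps(1) WhileE.prems(2) c by (simp add: ceval_cmap_projl)
  moreover have "lifts D E a0 \<sigma>a Err" using WhileE.IH WhileE.prems c by simp
  ultimately show ?case unfolding c lifts_def by (auto intro: exec.WhileE)
qed

lemma valid_proj:
  assumes "valid D E \<alpha> c \<beta>" "gh_ok E c" "ghost_loops_terminate D E c"
  shows "valid (D \<circ> Inl) (proj_env E)
    (\<lambda>\<sigma>. \<exists>\<sigma>a. wf_conf \<sigma>a \<and> user_conf \<sigma>a = \<sigma> \<and> \<alpha> \<sigma>a) (proj E c)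
    (\<lambda>\<sigma>. \<exists>\<sigma>a. wf_conf \<sigma>a \<and> user_conf \<sigma>a = \<sigma> \<and> \<beta> \<sigma>a)"
  unfolding valid_def
proof (intro allI impI conjI)
  fix \<sigma> assume "wf_conf \<sigma> \<and> (\<exists>\<sigma>a. wf_conf \<sigma>a \<and> user_conf \<sigma>a = \<sigma> \<and> \<alpha> \<sigma>a)"
  then obtain \<sigma>a where \<sigma>a: "wf_conf \<sigma>a" "\<sigma> = user_conf \<sigma>a" "\<alpha> \<sigma>a" by blast
  then have safe: "\<not> exec D E c \<sigma>a Err"
    and post: "\<And>\<sigma>a'. exec D E c \<sigma>a (Norm \<sigma>a') \<or> exec D E c \<sigma>a (Ret \<sigma>a') \<Longrightarrow> \<beta> \<sigma>a'"
    using assms(1) unfolding valid_def by blast+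
  have run: "\<exists>ra. exec D E c \<sigma>a ra \<and> user_outcome ra = r"
    if "exec (D \<circ> Inl) (proj_env E) (proj E c) \<sigma> r" for r
    using exec_proj_lifts[OF that refl \<sigma>a(2) assms(2,3) \<sigma>a(1)] safe unfolding lifts_def by blast
  show "\<not> exec (D \<circ> Inl) (proj_env E) (proj E c) \<sigma> Err"
    using run[of Err] safe by auto
  fix \<sigma>' assume "exec (D \<circ> Inl) (proj_env E) (proj E c) \<sigma> (Norm \<sigma>') \<or>
    exec (D \<circ> Inl) (proj_env E) (proj E c) \<sigma> (Ret \<sigma>')"
  then obtain \<sigma>a' where "exec D E c \<sigma>a (Norm \<sigma>a') \<or> exec D E c \<sigma>a (Ret \<sigma>a')" "user_conf \<sigma>a' = \<sigma>'"
    using run by force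
  moreover from this(1) have "wf_conf \<sigma>a'"
    using exec_wf_outcome defaults_not_obj \<sigma>a(1) by fastforce
  ultimately show "\<exists>\<sigma>a. wf_conf \<sigma>a \<and> user_conf \<sigma>a = \<sigma>' \<and> \<beta> \<sigma>a"
    using post by blast
qed

end

lemma ex_assn_lift:
  fixes \<rho> :: "(unit,'f + 'g,'o,'b) fm" and \<sigma> :: "('x,'f,'o,'b) conf"
  assumes "wf_conf \<sigma>" "ex_assn \<rho> \<psi> \<sigma>"
  shows "\<exists>\<sigma>a :: ('x + 'gx,'f + 'g,'o,'b) conf. wf_conf \<sigma>a \<and> user_conf \<sigma>a = \<sigma> \<and> aug_assn \<rho> \<psi> \<sigma>a"
proof -
  obtain G :: "'g \<Rightarrow> 'o \<Rightarrow> ('o,'b) val" where G: "\<forall>g. \<forall>ob\<in>al \<sigma>. allocd (al \<sigma>) (G g ob)"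
    "holds_LC \<rho> (al \<sigma>) (case_sum (hp \<sigma>) G)" "feval (st \<sigma>) (case_sum (hp \<sigma>) G) \<psi>"
    using assms(2) unfolding ex_assn_def by blast
  \<comment> \<open>ghost variables occur in no assertion; \<open>nil\<close> keeps the configuration well formed\<close>
  let ?\<sigma>a = "\<lparr>st = case_sum (st \<sigma>) (\<lambda>_. NilV), al = al \<sigma>, hp = case_sum (hp \<sigma>) G\<rparr>"
  have "allocd (al \<sigma>) (case_sum (st \<sigma>) (\<lambda>_. NilV) x)" for x
    using wf_conf_st[OF assms(1)] by (cases x) (simp_all add: allocd_def)
  moreover have "allocd (al \<sigma>) (case_sum (hp \<sigma>) G f ob)" if "ob \<in> al \<sigma>" for f ob
    using wf_conf_hp[OF assms(1) that] G(1) that by (cases f) simp_all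
  ultimately have "wf_conf ?\<sigma>a"
    using assms(1) unfolding wf_conf_def by (simp only: conf.select_convs) blast
  moreover have "user_conf ?\<sigma>a = \<sigma>"
    by (simp add: user_conf_eq_iff comp_def)
  moreover have "aug_assn \<rho> \<psi> ?\<sigma>a"
    using G(2,3) by (simp add: aug_assn_def)
  ultimately show ?thesis by blast
qed

lemma ex_assn_user_conf:
  assumes "wf_conf \<sigma>a" "aug_assn \<rho> \<psi> \<sigma>a"
  shows "ex_assn \<rho> \<psi> (user_conf \<sigma>a)"
proof -
  have "case_sum (hp \<sigma>a \<circ> Inl) (\<lambda>g. hp \<sigma>a (Inr g)) = hp \<sigma>a"
    by (simp add: fun_eq_iff split: sum.split)
  then show ?thesis
    using assms unfolding ex_assn_def aug_assn_def wf_conf_def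
    by (intro exI[of _ "\<lambda>g. hp \<sigma>a (Inr g)"]) (simp add: comp_def)
qed

theorem proposition3p4:
  fixes \<rho> :: "(unit, 'f::finite + 'g::finite, 'o, 'b) fm"
    and \<psi>pre \<psi>post :: "('x, 'f + 'g, 'o, 'b) fm"
    and E :: "('x + 'gx, 'f + 'g, 'o, 'b, 'm) env"
    and main :: "('x + 'gx, 'f + 'g, 'o, 'b, 'm) stmt"
    and dflt :: "'f \<Rightarrow> ('o,'b) val"
    and gdflt :: "'g \<Rightarrow> ('o,'b) val"
  assumes "\<forall>f. \<not> is_obj (dflt f)"
    and "\<forall>g. \<not> is_obj (gdflt g)"
    and "ghost_prog (case_sum dflt gdflt) E main"
    and "valid (case_sum dflt gdflt) E (aug_assn \<rho> \<psi>pre) main (aug_assn \<rho> \<psi>post)"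
  shows "valid dflt (proj_env E) (ex_assn \<rho> \<psi>pre) (proj E main) (ex_assn \<rho> \<psi>post)"
proof -
  interpret ghost_env "case_sum dflt gdflt" E
    using assms(1-3) by unfold_locales (auto simp: ghost_prog_def ghost_loops_terminate_def split: sum.split)
  have "gh_ok E main" "ghost_loops_terminate (case_sum dflt gdflt) E main"
    using assms(3) by (auto simp: ghost_prog_def ghost_loops_terminate_def)
  moreover have "case_sum dflt gdflt \<circ> Inl = dflt" by (simp add: fun_eq_iff)
  ultimately show ?thesis
    using valid_proj[OF assms(4)]
    by (auto elim!: valid_conseq dest: ex_assn_lift intro: ex_assn_user_conf)
qed

end
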